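(* $(\mathbf{Z}/11\mathbf{Z})\rtimes_4\mathbf{Z}\not\simeq(\mathbf{Z}/11\mathbf{Z})\rtimes_9\mathbf{Z}$.
   Context: For $b\in(\mathbf{Z}/11\mathbf{Z})^*$, $(\mathbf{Z}/11\mathbf{Z})\rtimes_b\mathbf{Z}$ denotes the semidirect product in which the generator $1\in\mathbf{Z}$ acts on $\mathbf{Z}/11\mathbf{Z}$ by multiplication by $b$. *)

theory Defs
  imports "HOL-Algebra.Group" "HOL-Number_Theory.Cong"
begin

text \<open>Elements of Z/nZ are represented by their least nonnegative residues {0..<n}.
  The inverse of a unit b modulo n, as a residue.\<close>
definition res_inv :: "int \<Rightarrow> int \<Rightarrow> int" where
  "res_inv n b = (SOME c. c \<in> {0..<n} \<and> [b * c = 1] (mod n))"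

definition sdp_act :: "int \<Rightarrow> int \<Rightarrow> int \<Rightarrow> int" where
  "sdp_act n b m = (if 0 \<le> m then b ^ nat m else res_inv n b ^ nat (- m)) mod n"

text \<open>The semidirect product (Z/nZ) \<rtimes>_b Z, with (a,m)(a',m') = (a + b^m a', m + m').\<close>
definition sdp :: "int \<Rightarrow> int \<Rightarrow> (int \<times> int) monoid" where
  "sdp n b = \<lparr> carrier = {0..<n} \<times> UNIV,
              monoid.mult = (\<lambda>(a, m) (a', m'). ((a + sdp_act n b m * a') mod n, m + m')),
              monoid.one = (0, 0) \<rparr>"

end

theory Submission
  imports Defs
begin

text \<open>Both groups are extensions of the infinite cyclic quotient by the torsion subgroup
  \<open>Z/11Z\<close>, and a generator of the quotient acts on the torsion subgroup by multiplication
  by \<open>b\<close> or by \<open>b\<^sup>-\<^sup>1\<close>. This pair is an isomorphism invariant; it is \<open>{4, 3}\<close> for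
  \<open>b = 4\<close> but \<open>{9, 5}\<close> for \<open>b = 9\<close>. The invariant is phrased with positive powers only,
  so that its transfer along an isomorphism needs nothing but multiplicativity and
  bijectivity, and no group axioms have to be verified for \<^const>\<open>sdp\<close>.\<close>

text \<open>\<open>spow G n x\<close> is the power \<open>x\<^sup>n\<^sup>+\<^sup>1\<close>, which needs no unit. So \<open>periodic G n x\<close> says
  \<open>x\<^sup>n = 1\<close>, and \<open>has_twisting_generator G n r\<close> says that \<open>G = T\<langle>g\<rangle>\<close> for the \<open>n\<close>-torsion \<open>T\<close>,
  where conjugation by \<open>g\<close> sends some nontrivial \<open>t \<in> T\<close> to \<open>t\<^sup>r\<^sup>+\<^sup>1\<close>.\<close>

fun spow :: "('a, 'b) monoid_scheme \<Rightarrow> nat \<Rightarrow> 'a \<Rightarrow> 'a" where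
  "spow G 0 x = x"
| "spow G (Suc n) x = spow G n x \<otimes>\<^bsub>G\<^esub> x"

definition periodic :: "('a, 'b) monoid_scheme \<Rightarrow> nat \<Rightarrow> 'a \<Rightarrow> bool" where
  "periodic G n x \<longleftrightarrow> spow G n x = x"

definition generates_mod_periodic :: "('a, 'b) monoid_scheme \<Rightarrow> nat \<Rightarrow> 'a \<Rightarrow> bool" where
  "generates_mod_periodic G n g \<longleftrightarrow>
     (\<forall>y\<in>carrier G. \<exists>s\<in>carrier G. periodic G n s \<and>
        (y = s \<or> (\<exists>k. y = s \<otimes>\<^bsub>G\<^esub> spow G k g \<or> y \<otimes>\<^bsub>G\<^esub> spow G k g = s)))"

definition has_twisting_generator :: "('a, 'b) monoid_scheme \<Rightarrow> nat \<Rightarrow> nat \<Rightarrow> bool" where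
  "has_twisting_generator G n r \<longleftrightarrow>
     (\<exists>g\<in>carrier G. \<exists>t\<in>carrier G. generates_mod_periodic G n g \<and>
        periodic G n t \<and> t \<otimes>\<^bsub>G\<^esub> t \<noteq> t \<and> g \<otimes>\<^bsub>G\<^esub> t = spow G r t \<otimes>\<^bsub>G\<^esub> g)"

context
  fixes G :: "('a, 'c) monoid_scheme"
  assumes mult_closed: "\<And>x y. x \<in> carrier G \<Longrightarrow> y \<in> carrier G \<Longrightarrow> x \<otimes>\<^bsub>G\<^esub> y \<in> carrier G"
begin

lemma spow_closed: "x \<in> carrier G \<Longrightarrow> spow G n x \<in> carrier G"
  by (induction n) (simp_all add: mult_closed)

lemma hom_spow:
  assumes "h \<in> hom G H" and "x \<in> carrier G"
  shows "h (spow G n x) = spow H n (h x)"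
  using assms by (induction n) (simp_all add: hom_mult spow_closed)

lemma hom_periodic:
  assumes "h \<in> hom G H" and "x \<in> carrier G" and "periodic G n x"
  shows "periodic H n (h x)"
  using assms hom_spow by (metis periodic_def)

lemma iso_generates_mod_periodic:
  assumes h: "h \<in> iso G H" and g: "g \<in> carrier G" and gen: "generates_mod_periodic G n g"
  shows "generates_mod_periodic H n (h g)"
  unfolding generates_mod_periodic_def
proof
  fix y assume "y \<in> carrier H"
  then obtain x where x: "x \<in> carrier G" and y: "y = h x"
    using h by (auto simp: iso_iff)
  obtain s where s: "s \<in> carrier G" "periodic G n s"
    and cases: "x = s \<or> (\<exists>k. x = s \<otimes>\<^bsub>G\<^esub> spow G k g \<or> x \<otimes>\<^bsub>G\<^esub> spow G k g = s)"
    using gen x unfolding generates_mod_periodic_def by blast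
  have hom: "h \<in> hom G H" using h by (simp add: iso_imp_homomorphism)
  have "h (z \<otimes>\<^bsub>G\<^esub> spow G k g) = h z \<otimes>\<^bsub>H\<^esub> spow H k (h g)" if "z \<in> carrier G" for z k
    using that hom g by (simp add: hom_mult spow_closed hom_spow)
  with cases s x have "y = h s \<or> (\<exists>k. y = h s \<otimes>\<^bsub>H\<^esub> spow H k (h g) \<or> y \<otimes>\<^bsub>H\<^esub> spow H k (h g) = h s)"
    unfolding y by metis
  moreover have "h s \<in> carrier H" "periodic H n (h s)"
    using s hom by (auto simp: hom_periodic hom_in_carrier)
  ultimately show "\<exists>s\<in>carrier H. periodic H n s \<and>
      (y = s \<or> (\<exists>k. y = s \<otimes>\<^bsub>H\<^esub> spow H k (h g) \<or> y \<otimes>\<^bsub>H\<^esub> spow H k (h g) = s))"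
    by blast
qed

lemma iso_has_twisting_generator:
  assumes "G \<cong> H" and "has_twisting_generator G n r"
  shows "has_twisting_generator H n r"
proof -
  obtain h where h: "h \<in> iso G H" using assms(1) by (auto simp: is_iso_def)
  then have hom: "h \<in> hom G H" and inj: "inj_on h (carrier G)"
    by (auto simp: iso_iff)
  obtain g t where g: "g \<in> carrier G" and t: "t \<in> carrier G"
    and gen: "generates_mod_periodic G n g" and per: "periodic G n t"
    and nonidem: "t \<otimes>\<^bsub>G\<^esub> t \<noteq> t" and twist: "g \<otimes>\<^bsub>G\<^esub> t = spow G r t \<otimes>\<^bsub>G\<^esub> g"
    using assms(2) unfolding has_twisting_generator_def by blast
  have "h t \<otimes>\<^bsub>H\<^esub> h t \<noteq> h t"
    using nonidem inj t mult_closed hom by (metis hom_mult inj_onD)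
  moreover have "h g \<otimes>\<^bsub>H\<^esub> h t = spow H r (h t) \<otimes>\<^bsub>H\<^esub> h g"
    using twist hom g t by (metis hom_mult hom_spow spow_closed)
  ultimately show ?thesis
    unfolding has_twisting_generator_def
    using g t hom h gen per
    by (intro bexI[of _ "h g"] bexI[of _ "h t"])
       (auto simp: hom_in_carrier iso_generates_mod_periodic hom_periodic)
qed

end

lemma sdp_mult: "(a, m) \<otimes>\<^bsub>sdp n b\<^esub> (a', m') = ((a + sdp_act n b m * a') mod n, m + m')"
  by (simp add: sdp_def)

lemma sdp_carrier: "carrier (sdp n b) = {0..<n} \<times> UNIV"
  by (simp add: sdp_def)

lemma sdp_mult_closed:
  "0 < n \<Longrightarrow> x \<in> carrier (sdp n b) \<Longrightarrow> y \<in> carrier (sdp n b) \<Longrightarrow>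
     x \<otimes>\<^bsub>sdp n b\<^esub> y \<in> carrier (sdp n b)"
  by (cases x; cases y) (simp add: sdp_mult sdp_carrier)

lemma sdp_act_0: "1 < n \<Longrightarrow> sdp_act n b 0 = 1"
  by (simp add: sdp_act_def)

lemma snd_spow_sdp: "snd (spow (sdp n b) k x) = int (Suc k) * snd x"
  by (induction k) (auto simp: sdp_def algebra_simps split: prod.splits)

lemma spow_sdp_fiber:
  assumes "1 < n" "a \<in> {0..<n}"
  shows "spow (sdp n b) k (a, 0) = ((int (Suc k) * a) mod n, 0)"
  using assms by (induction k) (simp_all add: sdp_mult sdp_act_0 mod_add_right_eq algebra_simps)

lemma spow_sdp_shift: "spow (sdp n b) k (0, 1) = (0, int (Suc k))"
  by (induction k) (simp_all add: sdp_mult)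

lemma sdp_periodic_iff:
  assumes "1 < n" "y \<in> carrier (sdp n b)"
  shows "periodic (sdp n b) (nat n) y \<longleftrightarrow> snd y = 0"
proof
  assume "periodic (sdp n b) (nat n) y"
  then have "int (Suc (nat n)) * snd y = snd y"
    by (metis periodic_def snd_spow_sdp)
  with assms(1) show "snd y = 0" by (simp add: algebra_simps)
next
  assume "snd y = 0"
  then obtain a where y: "y = (a, 0)" and a: "a \<in> {0..<n}"
    using assms(2) by (cases y) (auto simp: sdp_carrier)
  have "(int (Suc (nat n)) * a) mod n = (a + n * a) mod n"
    using assms(1) by (simp add: algebra_simps)
  with a assms(1) show "periodic (sdp n b) (nat n) y"
    by (simp add: periodic_def y spow_sdp_fiber)
qed

text \<open>Twisting the torsion element \<open>(1, 0)\<close> by the generator \<open>(0, 1)\<close> multiplies it by \<open>b\<close>.\<close>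

lemma sdp_has_twisting_generator:
  assumes n: "1 < n" and b: "[b = int r + 1] (mod n)"
  shows "has_twisting_generator (sdp n b) (nat n) r"
proof -
  have gen: "generates_mod_periodic (sdp n b) (nat n) (0, 1)"
    unfolding generates_mod_periodic_def
  proof
    fix y assume "y \<in> carrier (sdp n b)"
    then obtain a m where y: "y = (a, m)" and a: "a \<in> {0..<n}"
      by (auto simp: sdp_carrier)
    have s: "(a, 0) \<in> carrier (sdp n b)" "periodic (sdp n b) (nat n) (a, 0)"
      using a n by (auto simp: sdp_carrier sdp_periodic_iff)
    consider "m = 0" | "0 < m" | "m < 0" by linarith
    then have "y = (a, 0) \<or> (\<exists>k. y = (a, 0) \<otimes>\<^bsub>sdp n b\<^esub> spow (sdp n b) k (0, 1)
                 \<or> y \<otimes>\<^bsub>sdp n b\<^esub> spow (sdp n b) k (0, 1) = (a, 0))"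
    proof cases
      case 2
      then have "y = (a, 0) \<otimes>\<^bsub>sdp n b\<^esub> spow (sdp n b) (nat m - 1) (0, 1)"
        using a n by (simp add: y spow_sdp_shift sdp_mult sdp_act_0)
      then show ?thesis by blast
    next
      case 3
      then have "y \<otimes>\<^bsub>sdp n b\<^esub> spow (sdp n b) (nat (- m) - 1) (0, 1) = (a, 0)"
        using a by (simp add: y spow_sdp_shift sdp_mult)
      then show ?thesis by blast
    qed (simp add: y)
    with s show "\<exists>s\<in>carrier (sdp n b). periodic (sdp n b) (nat n) s \<and>
        (y = s \<or> (\<exists>k. y = s \<otimes>\<^bsub>sdp n b\<^esub> spow (sdp n b) k (0, 1)
                      \<or> y \<otimes>\<^bsub>sdp n b\<^esub> spow (sdp n b) k (0, 1) = s))"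
      by blast
  qed
  have "(0, 1) \<otimes>\<^bsub>sdp n b\<^esub> (1, 0) = spow (sdp n b) r (1, 0) \<otimes>\<^bsub>sdp n b\<^esub> (0, 1)"
    using n b by (simp add: sdp_mult spow_sdp_fiber sdp_act_0 sdp_act_def cong_def add.commute)
  moreover have "(1, 0) \<otimes>\<^bsub>sdp n b\<^esub> (1, 0) \<noteq> (1, 0)"
    using n by (cases "n = 2") (simp_all add: sdp_mult sdp_act_0)
  ultimately show ?thesis
    unfolding has_twisting_generator_def using gen n
    by (intro bexI[of _ "(0, 1)"] bexI[of _ "(1, 0)"]) (auto simp: sdp_carrier sdp_periodic_iff)
qed

lemma sdp_generator_snd:
  assumes n: "1 < n" and gen: "generates_mod_periodic (sdp n b) (nat n) g"
    and g: "g \<in> carrier (sdp n b)"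
  shows "snd g = 1 \<or> snd g = -1"
proof -
  have "(0, 1) \<in> carrier (sdp n b)" using n by (simp add: sdp_carrier)
  then obtain s where s: "s \<in> carrier (sdp n b)" "periodic (sdp n b) (nat n) s"
    and cases: "(0, 1) = s \<or> (\<exists>k. (0, 1) = s \<otimes>\<^bsub>sdp n b\<^esub> spow (sdp n b) k g
                                 \<or> (0, 1) \<otimes>\<^bsub>sdp n b\<^esub> spow (sdp n b) k g = s)"
    using gen unfolding generates_mod_periodic_def by blast
  have snd_s: "snd s = 0" using s n by (simp add: sdp_periodic_iff)
  have snd_mult: "snd (x \<otimes>\<^bsub>sdp n b\<^esub> z) = snd x + snd z" for x z
    by (cases x; cases z) (simp add: sdp_mult)
  have "int (Suc k) * snd g = 1" if "(0, 1) = s \<otimes>\<^bsub>sdp n b\<^esub> spow (sdp n b) k g" for k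
    using arg_cong[OF that, of snd] snd_s by (simp add: snd_mult snd_spow_sdp)
  moreover have "int (Suc k) * (- snd g) = 1"
    if "(0, 1) \<otimes>\<^bsub>sdp n b\<^esub> spow (sdp n b) k g = s" for k
    using arg_cong[OF that, of snd] snd_s by (simp add: snd_mult snd_spow_sdp)
  ultimately obtain k where "int (Suc k) * snd g = 1 \<or> int (Suc k) * (- snd g) = 1"
    using cases snd_s by fastforce
  then show ?thesis
    using pos_zmult_eq_1_iff[of "int (Suc k)" "snd g"] pos_zmult_eq_1_iff[of "int (Suc k)" "- snd g"]
    by auto
qed

text \<open>A generator has second coordinate \<open>\<plusminus>1\<close>, so it can only twist by \<open>b\<close> or \<open>res_inv n b\<close>.\<close>

lemma sdp_no_twisting_generator:
  assumes n: "prime n" and b: "\<not> [b = int r + 1] (mod n)"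
    and b_inv: "\<not> [res_inv n b = int r + 1] (mod n)"
  shows "\<not> has_twisting_generator (sdp n b) (nat n) r"
proof
  assume "has_twisting_generator (sdp n b) (nat n) r"
  then obtain g t where g: "g \<in> carrier (sdp n b)" and t: "t \<in> carrier (sdp n b)"
    and gen: "generates_mod_periodic (sdp n b) (nat n) g" and per: "periodic (sdp n b) (nat n) t"
    and nonidem: "t \<otimes>\<^bsub>sdp n b\<^esub> t \<noteq> t"
    and twist: "g \<otimes>\<^bsub>sdp n b\<^esub> t = spow (sdp n b) r t \<otimes>\<^bsub>sdp n b\<^esub> g"
    unfolding has_twisting_generator_def by blast
  have n1: "1 < n" using n by (simp add: prime_gt_1_int)
  obtain a m where g_eq: "g = (a, m)" using prod.exhaust by blast
  obtain c where t_eq: "t = (c, 0)" and c: "c \<in> {0..<n}"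
    using t per n1 by (cases t) (auto simp: sdp_carrier sdp_periodic_iff)
  have "c \<noteq> 0" using nonidem n1 by (auto simp: t_eq sdp_mult sdp_act_0)
  with c have "\<not> n dvd c" by (auto dest: zdvd_imp_le)
  with n have "coprime n c" by (rule prime_imp_coprime)
  then have "coprime c n" by (simp add: coprime_commute)
  have "fst (g \<otimes>\<^bsub>sdp n b\<^esub> t) = fst (spow (sdp n b) r t \<otimes>\<^bsub>sdp n b\<^esub> g)"
    using twist by simp
  then have "(a + sdp_act n b m * c) mod n = ((int (Suc r) * c) mod n + a) mod n"
    using n1 c by (simp add: g_eq t_eq sdp_mult spow_sdp_fiber sdp_act_0)
  then have "[a + sdp_act n b m * c = a + (int r + 1) * c] (mod n)"
    unfolding cong_def
    by (simp add: mod_add_left_eq mod_add_right_eq add.commute[of _ a] add.commute[of 1])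
  then have "[sdp_act n b m * c = (int r + 1) * c] (mod n)"
    by (simp add: cong_add_lcancel)
  with \<open>coprime c n\<close> have act: "[sdp_act n b m = int r + 1] (mod n)"
    by (simp add: cong_mult_rcancel)
  have "m = 1 \<or> m = -1" using sdp_generator_snd[OF n1 gen g] by (simp add: g_eq)
  with act have "[b = int r + 1] (mod n) \<or> [res_inv n b = int r + 1] (mod n)"
    by (auto simp: sdp_act_def cong_def)
  with b b_inv show False by blast
qed

lemma res_inv_11_9: "res_inv 11 9 = 5"
  unfolding res_inv_def
proof (rule some_equality)
  show "(5::int) \<in> {0..<11} \<and> [9 * 5 = 1] (mod (11::int))" by (simp add: cong_def)
next
  fix c :: int assume c: "c \<in> {0..<11} \<and> [9 * c = 1] (mod 11)"
  then have "[5 * (9 * c) = 5 * 1] (mod 11)" by (blast intro: cong_scalar_left)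
  then have "(c + 4 * c * 11) mod 11 = 5" by (simp add: cong_def algebra_simps)
  then have "c mod 11 = 5" by (simp only: mod_mult_self1)
  with c show "c = 5" by simp
qed

theorem lemma4p3:
  shows "\<not> (sdp 11 4 \<cong> sdp 11 9)"
proof
  assume iso: "sdp 11 4 \<cong> sdp 11 9"
  have "has_twisting_generator (sdp 11 4) 11 3"
    using sdp_has_twisting_generator[of 11 4 3] by (simp add: cong_def)
  moreover have "x \<otimes>\<^bsub>sdp 11 4\<^esub> y \<in> carrier (sdp 11 4)"
    if "x \<in> carrier (sdp 11 4)" "y \<in> carrier (sdp 11 4)" for x y
    using that by (simp add: sdp_mult_closed)
  ultimately have "has_twisting_generator (sdp 11 9) 11 3"
    using iso_has_twisting_generator iso by blast
  moreover have "\<not> has_twisting_generator (sdp 11 9) 11 3"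
    using sdp_no_twisting_generator[of 11 9 3] by (simp add: res_inv_11_9 cong_def)
  ultimately show False by contradiction
qed

end
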